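(* There exists a non-adaptive algorithm with one-sided error that, given a proximity parameter $0<\epsilon<1$, query access to a function $f\colon[n]\to\mathbb{R}$ (where $[n]=\{0,\dots,n-1\}$) and sample access to an unknown probability distribution $\mathcal{D}$ on $[n]$, accepts with probability $1$ if $f$ is convex and rejects with probability at least $2/3$ if $f$ is $\epsilon$-far from convex with respect to $\mathcal{D}$, using $O\!\left(\frac{\log n}{\epsilon}\right)$ queries to $f$ and $O\!\left(\frac1\epsilon\right)$ samples from $\mathcal{D}$.
   Context: A function $f\colon X\to\mathbb{R}$ on a finite set $X\subseteq\mathbb{R}^d$ is convex if for every finite collection $x_1,\dots,x_k\in X$ and reals $\lambda_i\ge0$ with $\sum_i\lambda_i=1$ and $\sum_i\lambda_ix_i\in X$, one has $f(\sum_i\lambda_ix_i)\le\sum_i\lambda_if(x_i)$. For a distribution $\mathcal{D}$ on $X$, a function $g$ is $\epsilon$-far from convex with respect to $\mathcal{D}$ if $\Pr_{x\sim\mathcal{D}}[g(x)\ne h(x)]\ge\epsilon$ for every convex $h\colon X\to\mathbb{R}$. Non-adaptive means all queries are chosen before any function value is observed. *)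

theory Defs
  imports "HOL-Probability.Probability_Mass_Function"
begin

text \<open>A function [n] -> R is represented by f :: nat => real; only its values on {..<n} matter.\<close>
definition convex_on_grid :: "nat \<Rightarrow> (nat \<Rightarrow> real) \<Rightarrow> bool" where
  "convex_on_grid n f \<longleftrightarrow>
     (\<forall>(k::nat) (x::nat \<Rightarrow> nat) (lam::nat \<Rightarrow> real) (y::nat).
        (\<forall>i<k. x i < n \<and> lam i \<ge> 0) \<and> (\<Sum>i<k. lam i) = 1 \<and> y < n \<and>
        (\<Sum>i<k. lam i * real (x i)) = real y
        \<longrightarrow> f y \<le> (\<Sum>i<k. lam i * f (x i)))"

definition far_from_convex :: "nat \<Rightarrow> nat pmf \<Rightarrow> real \<Rightarrow> (nat \<Rightarrow> real) \<Rightarrow> bool" where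
  "far_from_convex n D eps f \<longleftrightarrow>
     (\<forall>h. convex_on_grid n h \<longrightarrow> measure_pmf.prob D {x. f x \<noteq> h x} \<ge> eps)"

fun iid_samples :: "'a pmf \<Rightarrow> nat \<Rightarrow> 'a list pmf" where
  "iid_samples D 0 = return_pmf []"
| "iid_samples D (Suc k) =
     bind_pmf D (\<lambda>x. bind_pmf (iid_samples D k) (\<lambda>xs. return_pmf (x # xs)))"

text \<open>A non-adaptive sample-based tester with parameters (n, eps):
  it draws internal randomness r from R n eps, draws m n eps samples from D,
  then (as a function of r and the samples only, i.e. before seeing any value of f)
  chooses the list of query points Q n eps r s, and finally decides
  (True = accept) from r, the samples and the answers to its queries. \<close>
definition tester_run ::
  "(nat \<Rightarrow> real \<Rightarrow> nat pmf) \<Rightarrow> (nat \<Rightarrow> real \<Rightarrow> nat) \<Rightarrow>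
   (nat \<Rightarrow> real \<Rightarrow> nat \<Rightarrow> nat list \<Rightarrow> nat list) \<Rightarrow>
   (nat \<Rightarrow> real \<Rightarrow> nat \<Rightarrow> nat list \<Rightarrow> real list \<Rightarrow> bool) \<Rightarrow>
   nat \<Rightarrow> real \<Rightarrow> nat pmf \<Rightarrow> (nat \<Rightarrow> real) \<Rightarrow> bool pmf" where
  "tester_run R m Q Dec n eps D f =
     bind_pmf (R n eps) (\<lambda>r. bind_pmf (iid_samples D (m n eps)) (\<lambda>s.
       return_pmf (Dec n eps r s (map f (Q n eps r s)))))"

end

theory Submission
  imports Defs "HOL-Analysis.Harmonic_Numbers"
begin

(* For every sample x the tester queries the points visited by a binary search for x in
  [0, n-1], including both middle points m, m+1 of every interval on the way, and it accepts
  iff all queried values have increasing slopes; a convex f therefore always passes.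
  Call x good if f has increasing slopes along the search path of x. The search paths of
  a < b agree until an interval whose middle points m, m+1 separate them (a <= m < b), so
  monotonicity along the two paths brackets slope(a, b) between slope(a, m+1) and slope(m, b).
  Chaining these brackets through b shows that the good points have increasing slopes, hence f
  restricted to them extends to a convex function (the maximum of supporting lines). If f is
  eps-far from convex, the good points thus have D-mass at most 1 - eps, and the tester
  accepts only if all ceil(2/eps) samples are good: probability at most exp(-2) < 1/3. *)

section \<open>Slopes and convexity on the grid\<close>

definition slope :: "(nat \<Rightarrow> real) \<Rightarrow> nat \<Rightarrow> nat \<Rightarrow> real" where
  "slope f a b = (f b - f a) / (real b - real a)"

lemma slope_le_slope_iff:
  assumes "a < b" "b < c"
  shows "slope f a b \<le> slope f b c \<longleftrightarrow>
           (real c - real a) * f b \<le> (real c - real b) * f a + (real b - real a) * f c"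
  using assms by (simp add: slope_def field_simps)

lemma slope_le_slope_iff_left:
  assumes "a < b" "b < c"
  shows "slope f a b \<le> slope f b c \<longleftrightarrow> slope f a b \<le> slope f a c"
  using assms by (simp add: slope_def field_simps)

lemma slope_le_slope_iff_right:
  assumes "a < b" "b < c"
  shows "slope f a b \<le> slope f b c \<longleftrightarrow> slope f a c \<le> slope f b c"
  using assms by (simp add: slope_def field_simps)

definition slopes_increasing_on :: "nat set \<Rightarrow> (nat \<Rightarrow> real) \<Rightarrow> bool" where
  "slopes_increasing_on S f \<longleftrightarrow>
     (\<forall>a\<in>S. \<forall>b\<in>S. \<forall>c\<in>S. a < b \<longrightarrow> b < c \<longrightarrow> slope f a b \<le> slope f b c)"

lemma slopes_increasing_onI:
  "(\<And>a b c. a \<in> S \<Longrightarrow> b \<in> S \<Longrightarrow> c \<in> S \<Longrightarrow> a < b \<Longrightarrow> b < c \<Longrightarrow> slope f a b \<le> slope f b c)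
   \<Longrightarrow> slopes_increasing_on S f"
  by (simp add: slopes_increasing_on_def)

lemma slopes_increasing_onD:
  "slopes_increasing_on S f \<Longrightarrow> a \<in> S \<Longrightarrow> b \<in> S \<Longrightarrow> c \<in> S \<Longrightarrow> a < b \<Longrightarrow> b < c
   \<Longrightarrow> slope f a b \<le> slope f b c"
  by (simp add: slopes_increasing_on_def)

lemma slopes_increasing_on_subset:
  "slopes_increasing_on S f \<Longrightarrow> T \<subseteq> S \<Longrightarrow> slopes_increasing_on T f"
  by (auto simp: slopes_increasing_on_def)

lemma slopes_increasing_on_cong:
  "(\<And>x. x \<in> S \<Longrightarrow> f x = g x) \<Longrightarrow> slopes_increasing_on S f \<longleftrightarrow> slopes_increasing_on S g"
  by (simp add: slopes_increasing_on_def slope_def)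

lemma convex_on_gridD:
  fixes k :: nat
  assumes "convex_on_grid n f" "\<forall>i<k. x i < n \<and> 0 \<le> lam i" "(\<Sum>i<k. lam i) = 1" "y < n"
    "(\<Sum>i<k. lam i * real (x i)) = real y"
  shows "f y \<le> (\<Sum>i<k. lam i * f (x i))"
  using assms unfolding convex_on_grid_def by blast

lemma convex_on_grid_imp_slopes_increasing:
  assumes "convex_on_grid n f"
  shows "slopes_increasing_on {..<n} f"
proof (rule slopes_increasing_onI)
  fix a b c assume "a \<in> {..<n}" "b \<in> {..<n}" "c \<in> {..<n}" "a < b" "b < c"
  then have abc: "a < b" "b < c" "c < n" by auto
  define t where "t = (real b - real a) / (real c - real a)"
  have ca: "real c - real a > 0" using abc by simp
  have t: "0 \<le> t" "t \<le> 1" "t * (real c - real a) = real b - real a"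
    using abc ca by (simp_all add: t_def)
  define x where "x i = (if i = 0 then a else c)" for i :: nat
  define lam where "lam i = (if i = 0 then 1 - t else t)" for i :: nat
  have weights: "\<forall>i<2. x i < n \<and> 0 \<le> lam i" "(\<Sum>i<2. lam i) = 1"
    using abc t by (auto simp: x_def lam_def numeral_2_eq_2)
  have comb: "(\<Sum>i<2. lam i * real (x i)) = real b"
    using t(3) by (simp add: x_def lam_def numeral_2_eq_2 algebra_simps)
  have "f b \<le> (\<Sum>i<2. lam i * f (x i))"
    using abc by (intro convex_on_gridD[OF assms weights _ comb]) simp
  then have "(real c - real a) * f b \<le> (real c - real a) * ((1 - t) * f a + t * f c)"
    using ca by (simp add: x_def lam_def numeral_2_eq_2)
  also have "\<dots> = (real c - real a - t * (real c - real a)) * f a + t * (real c - real a) * f c"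
    by (simp add: algebra_simps)
  also have "\<dots> = (real c - real b) * f a + (real b - real a) * f c"
    by (simp add: t(3))
  finally show "slope f a b \<le> slope f b c"
    using abc by (simp add: slope_le_slope_iff)
qed

lemma convex_on_grid_of_convex_on:
  assumes "convex_on UNIV g"
  shows "convex_on_grid n (\<lambda>k. g (real k))"
  unfolding convex_on_grid_def
proof (intro allI impI, elim conjE)
  fix k and x :: "nat \<Rightarrow> nat" and lam :: "nat \<Rightarrow> real" and y
  assume lam: "\<forall>i<k. x i < n \<and> 0 \<le> lam i" "(\<Sum>i<k. lam i) = 1"
    and y: "(\<Sum>i<k. lam i * real (x i)) = real y"
  have "{..<k} \<noteq> {}" using lam(2) by auto
  then have "g (\<Sum>i<k. lam i *\<^sub>R real (x i)) \<le> (\<Sum>i<k. lam i * g (real (x i)))"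
    using assms lam by (intro convex_on_sum) auto
  then show "g (real y) \<le> (\<Sum>i<k. lam i * g (real (x i)))"
    using y by simp
qed

lemma convex_on_Max:
  assumes "finite I" "I \<noteq> {}" "\<And>i. i \<in> I \<Longrightarrow> convex_on S (f i)"
  shows "convex_on S (\<lambda>x. Max ((\<lambda>i. f i x) ` I))"
proof (rule convex_onI)
  show "convex S"
    using assms(2,3) convex_on_imp_convex by blast
  fix t :: real and x y assume t: "0 < t" "t < 1" and xy: "x \<in> S" "y \<in> S"
  show "Max ((\<lambda>i. f i ((1 - t) *\<^sub>R x + t *\<^sub>R y)) ` I)
        \<le> (1 - t) * Max ((\<lambda>i. f i x) ` I) + t * Max ((\<lambda>i. f i y) ` I)"
  proof (subst Max_le_iff, safe)
    fix i assume i: "i \<in> I"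
    have "f i ((1 - t) *\<^sub>R x + t *\<^sub>R y) \<le> (1 - t) * f i x + t * f i y"
      using assms(3)[OF i] t xy by (intro convex_onD) auto
    also have "\<dots> \<le> (1 - t) * Max ((\<lambda>i. f i x) ` I) + t * Max ((\<lambda>i. f i y) ` I)"
      using t i assms(1) by (intro add_mono mult_left_mono Max_ge) auto
    finally show "f i ((1 - t) *\<^sub>R x + t *\<^sub>R y)
        \<le> (1 - t) * Max ((\<lambda>i. f i x) ` I) + t * Max ((\<lambda>i. f i y) ` I)" .
  qed (use assms in auto)
qed

lemma convex_on_affine: "convex_on UNIV (\<lambda>t::real. a + b * (t - c))"
  by (rule convex_onI) (simp_all add: algebra_simps)

lemma finite_sets_separated:
  fixes A B :: "real set"
  assumes "finite A" "finite B" "\<And>a b. a \<in> A \<Longrightarrow> b \<in> B \<Longrightarrow> a \<le> b"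
  shows "\<exists>s. (\<forall>a\<in>A. a \<le> s) \<and> (\<forall>b\<in>B. s \<le> b)"
proof (cases "B = {}")
  case True
  then show ?thesis
    using assms(1) by (intro exI[of _ "Max (insert 0 A)"]) auto
next
  case False
  then show ?thesis
    using assms by (intro exI[of _ "Min B"]) auto
qed

lemma slopes_increasing_on_convex_extension:
  assumes "finite G" "slopes_increasing_on G f"
  shows "\<exists>h. convex_on_grid n h \<and> (\<forall>x\<in>G. h x = f x)"
proof (cases "G = {}")
  case True
  then show ?thesis
    using convex_on_grid_of_convex_on[of "\<lambda>_. 0"] by (auto simp: convex_on_const)
next
  case False
  have "\<exists>s. (\<forall>y\<in>G. y < x \<longrightarrow> slope f y x \<le> s) \<and> (\<forall>z\<in>G. x < z \<longrightarrow> s \<le> slope f x z)"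
    if "x \<in> G" for x
  proof -
    have "\<exists>s. (\<forall>l\<in>(\<lambda>y. slope f y x) ` {y\<in>G. y < x}. l \<le> s) \<and>
              (\<forall>r\<in>(\<lambda>z. slope f x z) ` {z\<in>G. x < z}. s \<le> r)"
      using assms that by (intro finite_sets_separated) (auto intro: slopes_increasing_onD)
    then show ?thesis by auto
  qed
  then obtain s where s_left: "\<And>x y. x \<in> G \<Longrightarrow> y \<in> G \<Longrightarrow> y < x \<Longrightarrow> slope f y x \<le> s x"
    and s_right: "\<And>x z. x \<in> G \<Longrightarrow> z \<in> G \<Longrightarrow> x < z \<Longrightarrow> s x \<le> slope f x z"
    by metis
  define L where "L x t = f x + s x * (t - real x)" for x t
  have support: "L x (real y) \<le> f y" if "x \<in> G" "y \<in> G" for x y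
  proof -
    consider "y < x" | "y = x" | "x < y" by linarith
    then show ?thesis
    proof cases
      case 1
      then have "f x - f y \<le> s x * (real x - real y)"
        using s_left[OF that 1] by (simp add: slope_def field_simps)
      then show ?thesis by (simp add: L_def algebra_simps)
    next
      case 3
      then have "s x * (real y - real x) \<le> f y - f x"
        using s_right[OF that 3] by (simp add: slope_def field_simps)
      then show ?thesis by (simp add: L_def algebra_simps)
    qed (simp add: L_def)
  qed
  define h where "h t = Max ((\<lambda>x. L x t) ` G)" for t
  have "convex_on UNIV h"
    unfolding h_def L_def using assms(1) False by (intro convex_on_Max) (simp_all add: convex_on_affine)
  moreover have "h (real x) = f x" if "x \<in> G" for x
    unfolding h_def using assms(1) that support by (intro Max_eqI) (auto simp: L_def intro: rev_image_eqI[of x])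
  ultimately show ?thesis
    using convex_on_grid_of_convex_on by blast
qed

section \<open>Binary-search paths\<close>

function bisect_path :: "nat \<Rightarrow> nat \<Rightarrow> nat \<Rightarrow> nat list" where
  "bisect_path l r x =
     (if r \<le> l then [l]
      else let m = (l + r) div 2 in
        [l, r, m, Suc m] @ (if x \<le> m then bisect_path l m x else bisect_path (Suc m) r x))"
  by pat_completeness auto
termination by (relation "Wellfounded.measure (\<lambda>(l, r, x). r - l)") auto

declare bisect_path.simps [simp del]

lemma bisect_path_split:
  "\<not> r \<le> l \<Longrightarrow> bisect_path l r x = [l, r, (l + r) div 2, Suc ((l + r) div 2)] @
     (if x \<le> (l + r) div 2 then bisect_path l ((l + r) div 2) x
      else bisect_path (Suc ((l + r) div 2)) r x)"
  by (subst bisect_path.simps) (simp add: Let_def)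

lemma bisect_path_mem_self: "l \<le> x \<Longrightarrow> x \<le> r \<Longrightarrow> x \<in> set (bisect_path l r x)"
proof (induction l r x rule: bisect_path.induct)
  case (1 l r x)
  show ?case
  proof (cases "r \<le> l")
    case False
    with "1.IH"[OF False refl] "1.prems" show ?thesis
      by (auto simp: bisect_path_split)
  qed (use "1.prems" in \<open>simp add: bisect_path.simps\<close>)
qed

lemma set_bisect_path_subset: "set (bisect_path l r x) \<subseteq> {l..max l r}"
proof (induction l r x rule: bisect_path.induct)
  case (1 l r x)
  show ?case
  proof (cases "r \<le> l")
    case False
    define m where "m = (l + r) div 2"
    have "l \<le> m" "m < r" using False unfolding m_def by linarith+
    then have "{l..max l m} \<subseteq> {l..r}" "{Suc m..max (Suc m) r} \<subseteq> {l..r}" by auto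
    with "1.IH"[OF False m_def]
    have "x \<le> m \<Longrightarrow> set (bisect_path l m x) \<subseteq> {l..r}"
      and "\<not> x \<le> m \<Longrightarrow> set (bisect_path (Suc m) r x) \<subseteq> {l..r}"
      by blast+
    with \<open>l \<le> m\<close> \<open>m < r\<close> show ?thesis
      by (simp add: bisect_path_split False m_def[symmetric])
  qed (simp add: bisect_path.simps)
qed

lemma length_bisect_path: "r - l < 2 ^ k \<Longrightarrow> length (bisect_path l r x) \<le> 4 * k + 1"
proof (induction l r x arbitrary: k rule: bisect_path.induct)
  case (1 l r x)
  show ?case
  proof (cases "r \<le> l")
    case False
    define m where "m = (l + r) div 2"
    obtain j where j: "k = Suc j" "m - l < 2 ^ j" "r - Suc m < 2 ^ j"
      using "1.prems" False unfolding m_def by (cases k) auto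
    have "length (if x \<le> m then bisect_path l m x else bisect_path (Suc m) r x) \<le> 4 * j + 1"
      using "1.IH"[OF False refl] j(2,3) unfolding m_def by simp
    then show ?thesis
      using False j(1) unfolding m_def by (simp add: bisect_path_split)
  qed (simp add: bisect_path.simps)
qed

lemma bisect_path_separates:
  assumes "l \<le> a" "a < b" "b \<le> r"
  shows "\<exists>m. a \<le> m \<and> m < b \<and> {m, Suc m} \<subseteq> set (bisect_path l r a) \<inter> set (bisect_path l r b)"
  using assms
proof (induction l r a arbitrary: b rule: bisect_path.induct)
  case (1 l r a)
  define m where "m = (l + r) div 2"
  have lr: "\<not> r \<le> l" using "1.prems" by simp
  have paths: "bisect_path l r x = [l, r, m, Suc m] @
      (if x \<le> m then bisect_path l m x else bisect_path (Suc m) r x)" for x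
    using bisect_path_split[OF lr] unfolding m_def .
  consider (left) "b \<le> m" | (right) "m < a" | (split) "a \<le> m" "m < b" by linarith
  then show ?case
  proof cases
    case left
    then have "\<exists>m'. a \<le> m' \<and> m' < b \<and>
        {m', Suc m'} \<subseteq> set (bisect_path l m a) \<inter> set (bisect_path l m b)"
      using "1.IH"(1)[OF lr refl] "1.prems" unfolding m_def by simp
    with left "1.prems" show ?thesis
      unfolding paths by auto
  next
    case right
    then have "\<exists>m'. a \<le> m' \<and> m' < b \<and>
        {m', Suc m'} \<subseteq> set (bisect_path (Suc m) r a) \<inter> set (bisect_path (Suc m) r b)"
      using "1.IH"(2)[OF lr refl] "1.prems" unfolding m_def by simp
    with right "1.prems" show ?thesis
      unfolding paths by auto
  next
    case split
    then show ?thesis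
      unfolding paths by auto
  qed
qed

lemma slope_bounds_at_separator:
  assumes A: "slopes_increasing_on A f" "{a, m, Suc m} \<subseteq> A"
    and B: "slopes_increasing_on B f" "{m, Suc m, b} \<subseteq> B"
    and "a \<le> m" "m < b"
  shows "slope f a (Suc m) \<le> slope f a b" "slope f a b \<le> slope f m b"
proof -
  have left: "slope f a m \<le> slope f m (Suc m)" if "a < m"
    using A that by (intro slopes_increasing_onD[OF A(1)]) auto
  have right: "slope f m (Suc m) \<le> slope f (Suc m) b" if "Suc m < b"
    using B that by (intro slopes_increasing_onD[OF B(1)]) auto
  show "slope f a b \<le> slope f m b"
  proof (cases "a = m")
    case False
    have "slope f m (Suc m) \<le> slope f m b"
      using right slope_le_slope_iff_left[of m "Suc m" b f] \<open>m < b\<close>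
      by (cases "Suc m = b") auto
    with left False \<open>a \<le> m\<close> \<open>m < b\<close> show ?thesis
      using slope_le_slope_iff_right[of a m b f] by auto
  qed simp
  show "slope f a (Suc m) \<le> slope f a b"
  proof (cases "Suc m = b")
    case False
    have "slope f a (Suc m) \<le> slope f m (Suc m)"
      using left slope_le_slope_iff_right[of a m "Suc m" f] \<open>a \<le> m\<close>
      by (cases "a = m") auto
    with right False \<open>a \<le> m\<close> \<open>m < b\<close> show ?thesis
      using slope_le_slope_iff_left[of a "Suc m" b f] by auto
  qed simp
qed

lemma slopes_increasing_on_points_with_convex_path:
  "slopes_increasing_on {x \<in> {l..r}. slopes_increasing_on (set (bisect_path l r x)) f} f"
proof (rule slopes_increasing_onI, clarify)
  fix a b c
  assume a: "a \<in> {l..r}" "slopes_increasing_on (set (bisect_path l r a)) f"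
    and b: "b \<in> {l..r}" "slopes_increasing_on (set (bisect_path l r b)) f"
    and c: "c \<in> {l..r}" "slopes_increasing_on (set (bisect_path l r c)) f"
    and "a < b" "b < c"
  obtain m where m: "a \<le> m" "m < b" "{m, Suc m} \<subseteq> set (bisect_path l r a) \<inter> set (bisect_path l r b)"
    using bisect_path_separates[of l a b r] \<open>a < b\<close> a(1) b(1) by auto
  obtain m' where m': "b \<le> m'" "m' < c" "{m', Suc m'} \<subseteq> set (bisect_path l r b) \<inter> set (bisect_path l r c)"
    using bisect_path_separates[of l b c r] \<open>b < c\<close> b(1) c(1) by auto
  have self: "x \<in> set (bisect_path l r x)" if "x \<in> {l..r}" for x
    using that bisect_path_mem_self by auto
  have "slope f a b \<le> slope f m b"
    using slope_bounds_at_separator(2)[OF a(2) _ b(2)] m self a(1) b(1) by auto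
  also have "\<dots> \<le> slope f b (Suc m')"
    using slopes_increasing_onD[OF b(2)] m m' self b(1) by auto
  also have "\<dots> \<le> slope f b c"
    using slope_bounds_at_separator(1)[OF b(2) _ c(2)] m' self b(1) c(1) by auto
  finally show "slope f a b \<le> slope f b c" .
qed

section \<open>Independent samples\<close>

lemma iid_samples_eq_replicate_pmf: "iid_samples D k = replicate_pmf k D"
  by (induction k) simp_all

lemma prob_replicate_pmf_lists:
  "measure_pmf.prob (replicate_pmf k D) (lists A) = measure_pmf.prob D A ^ k"
proof -
  have "emeasure (replicate_pmf k D) (lists A) = emeasure D A ^ k"
  proof (induction k)
    case (Suc k)
    have "indicator (lists A) (x # xs) = (indicator A x * indicator (lists A) xs :: ennreal)" for x xs
      by (simp add: indicator_def)
    then have "emeasure (replicate_pmf (Suc k) D) (lists A)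
        = (\<integral>\<^sup>+x. indicator A x * emeasure (replicate_pmf k D) (lists A) \<partial>D)"
      by (simp add: nn_integral_cmult)
    also have "\<dots> = emeasure D A ^ Suc k"
      using Suc.IH by (simp add: nn_integral_multc mult.commute)
    finally show ?case .
  qed simp
  then show ?thesis
    by (simp add: measure_pmf.emeasure_eq_measure ennreal_power)
qed

lemma power_le_exp_neg_mult:
  fixes p eps :: real
  assumes "0 \<le> p" "p \<le> 1 - eps"
  shows "p ^ m \<le> exp (- eps * real m)"
proof -
  have "p ^ m \<le> exp (- eps) ^ m"
    using assms exp_ge_add_one_self[of "- eps"] by (intro power_mono) auto
  then show ?thesis
    by (simp add: exp_of_nat_mult[symmetric] mult.commute)
qed

section \<open>The tester\<close>

definition num_samples :: "real \<Rightarrow> nat" where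
  "num_samples eps = nat \<lceil>2 / eps\<rceil>"

definition tester_queries :: "nat \<Rightarrow> real \<Rightarrow> nat list \<Rightarrow> nat list" where
  "tester_queries n eps s = concat (map (bisect_path 0 (n - 1)) (take (num_samples eps) s))"

definition tester_accepts :: "nat \<Rightarrow> real \<Rightarrow> nat list \<Rightarrow> real list \<Rightarrow> bool" where
  "tester_accepts n eps s vals =
     (let qs = tester_queries n eps s in
      slopes_increasing_on (set qs) (\<lambda>q. the (map_of (zip qs vals) q)))"

lemma num_samples_ge: "0 < eps \<Longrightarrow> 2 / eps \<le> real (num_samples eps)"
  unfolding num_samples_def by linarith

lemma num_samples_le: "0 < eps \<Longrightarrow> eps \<le> 1 \<Longrightarrow> real (num_samples eps) \<le> 3 / eps"
proof -
  assume eps: "0 < eps" "eps \<le> 1"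
  have "real (num_samples eps) = of_int \<lceil>2 / eps\<rceil>"
    using eps by (simp add: num_samples_def)
  also have "\<dots> \<le> 2 / eps + 1"
    by (rule of_int_ceiling_le_add_one)
  also have "\<dots> \<le> 3 / eps"
    using eps by (simp add: field_simps)
  finally show ?thesis .
qed

lemma tester_accepts_iff:
  "tester_accepts n eps s (map f (tester_queries n eps s))
     \<longleftrightarrow> slopes_increasing_on (set (tester_queries n eps s)) f"
  unfolding tester_accepts_def Let_def
  by (rule slopes_increasing_on_cong) (simp add: map_of_zip_map)

lemma tester_queries_less: "1 \<le> n \<Longrightarrow> q \<in> set (tester_queries n eps s) \<Longrightarrow> q < n"
  using set_bisect_path_subset[of 0 "n - 1"] by (fastforce simp: tester_queries_def)

lemma length_tester_queries:
  assumes n: "2 \<le> n" and eps: "0 < eps" "eps < 1"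
  shows "real (length (tester_queries n eps s)) \<le> 41 * ln (real n) / eps"
proof -
  define k where "k = nat \<lceil>log 2 (real n)\<rceil>"
  have log_n: "1 \<le> log 2 (real n)" "log 2 (real n) \<le> 3 / 2 * ln (real n)"
    using n ln2_ge_two_thirds by (simp_all add: log_def field_simps)
  have "real n \<le> real (2 ^ k)"
    unfolding k_def using power_of_nat_log_ge[of 2 "real n"] by simp
  then have "n - 1 - 0 < 2 ^ k"
    unfolding of_nat_le_iff using n by linarith
  then have path_length: "length (bisect_path 0 (n - 1) x) \<le> 4 * k + 1" for x
    by (rule length_bisect_path)
  have "length (tester_queries n eps s)
      = (\<Sum>x\<leftarrow>take (num_samples eps) s. length (bisect_path 0 (n - 1) x))"
    by (simp add: tester_queries_def length_concat comp_def)
  also have "\<dots> \<le> (\<Sum>x\<leftarrow>take (num_samples eps) s. 4 * k + 1)"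
    by (rule sum_list_mono) (rule path_length)
  also have "\<dots> \<le> num_samples eps * (4 * k + 1)"
    unfolding sum_list_triv of_nat_id by (intro mult_le_mono1) simp
  finally have "real (length (tester_queries n eps s)) \<le> real (num_samples eps * (4 * k + 1))"
    by (rule of_nat_mono)
  also have "\<dots> = real (num_samples eps) * (4 * real k + 1)"
    by (simp add: algebra_simps)
  also have "\<dots> \<le> 3 / eps * (27 / 2 * ln (real n))"
  proof (rule mult_mono)
    have "real k = of_int \<lceil>log 2 (real n)\<rceil>"
      using log_n by (simp add: k_def)
    then show "4 * real k + 1 \<le> 27 / 2 * ln (real n)"
      using of_int_ceiling_le_add_one[of "log 2 (real n)"] log_n by linarith
  qed (use num_samples_le[of eps] eps in auto)
  also have "\<dots> \<le> 41 * ln (real n) / eps"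
    using n eps by (simp add: field_simps)
  finally show ?thesis .
qed

lemma tester_accepts_convex:
  assumes "1 \<le> n" "convex_on_grid n f"
  shows "tester_accepts n eps s (map f (tester_queries n eps s))"
  unfolding tester_accepts_iff
  using convex_on_grid_imp_slopes_increasing[OF assms(2)] tester_queries_less[OF assms(1)]
  by (blast intro: slopes_increasing_on_subset)

lemma prob_agree_le_if_far_from_convex:
  assumes "far_from_convex n D eps f" "convex_on_grid n h"
  shows "measure_pmf.prob D {x. f x = h x} \<le> 1 - eps"
proof -
  have "eps \<le> measure_pmf.prob D (UNIV - {x. f x = h x})"
    using assms unfolding far_from_convex_def by (simp add: set_diff_eq)
  then show ?thesis
    using measure_pmf.prob_compl[of "{x. f x = h x}" D] by simp
qed

lemma tester_accepts_imp_path_convex: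
  assumes "tester_accepts n eps s (map f (tester_queries n eps s))"
    and "x \<in> set (take (num_samples eps) s)"
  shows "slopes_increasing_on (set (bisect_path 0 (n - 1) x)) f"
proof (rule slopes_increasing_on_subset)
  show "slopes_increasing_on (set (tester_queries n eps s)) f"
    using assms(1) by (simp add: tester_accepts_iff)
  show "set (bisect_path 0 (n - 1) x) \<subseteq> set (tester_queries n eps s)"
    using assms(2) by (auto simp: tester_queries_def)
qed

lemma prob_tester_accepts_far:
  assumes eps: "0 < eps" and D: "set_pmf D \<subseteq> {..<n}" and far: "far_from_convex n D eps f"
  shows "measure_pmf.prob (replicate_pmf (num_samples eps) D)
           {s. tester_accepts n eps s (map f (tester_queries n eps s))} \<le> 1 / 3"
proof -
  define G where "G = {x \<in> {0..n - 1}. slopes_increasing_on (set (bisect_path 0 (n - 1) x)) f}"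
  have "finite G" "slopes_increasing_on G f"
    unfolding G_def by (simp, rule slopes_increasing_on_points_with_convex_path)
  then obtain h where h: "convex_on_grid n h" "\<forall>x\<in>G. h x = f x"
    using slopes_increasing_on_convex_extension by blast
  have "measure_pmf.prob D G \<le> measure_pmf.prob D {x. f x = h x}"
    using h(2) by (intro measure_pmf.finite_measure_mono) auto
  also have "\<dots> \<le> 1 - eps"
    using far h(1) by (rule prob_agree_le_if_far_from_convex)
  finally have prob_G: "measure_pmf.prob D G \<le> 1 - eps" .
  define M where "M = replicate_pmf (num_samples eps) D"
  define A where "A = {s. tester_accepts n eps s (map f (tester_queries n eps s))}"
  have "A \<inter> set_pmf M \<subseteq> lists G"
  proof safe
    fix s x assume s: "s \<in> A" "s \<in> set_pmf M" and x: "x \<in> set s"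
    then have "take (num_samples eps) s = s" "x < n"
      using D unfolding M_def set_replicate_pmf by auto
    then show "x \<in> G"
      using tester_accepts_imp_path_convex[of n eps s f x] s(1) x by (simp add: A_def G_def)
  qed
  then have "measure_pmf.prob M A \<le> measure_pmf.prob M (lists G)"
    by (subst measure_Int_set_pmf[symmetric]) (rule measure_pmf.finite_measure_mono, auto)
  also have "\<dots> = measure_pmf.prob D G ^ num_samples eps"
    unfolding M_def by (rule prob_replicate_pmf_lists)
  also have "\<dots> \<le> exp (- eps * real (num_samples eps))"
    using prob_G by (intro power_le_exp_neg_mult) simp_all
  also have "\<dots> \<le> exp (- 2)"
    using num_samples_ge[OF eps] eps by (simp add: field_simps)
  also have "\<dots> \<le> 1 / 3"
    using exp_ge_add_one_self[of 2] by (simp add: exp_minus field_simps)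
  finally show ?thesis
    unfolding M_def A_def .
qed

theorem theorem1p2:
  shows "\<exists>(R :: nat \<Rightarrow> real \<Rightarrow> nat pmf) (m :: nat \<Rightarrow> real \<Rightarrow> nat)
           (Q :: nat \<Rightarrow> real \<Rightarrow> nat \<Rightarrow> nat list \<Rightarrow> nat list)
           (Dec :: nat \<Rightarrow> real \<Rightarrow> nat \<Rightarrow> nat list \<Rightarrow> real list \<Rightarrow> bool) (C :: real).
     C > 0 \<and>
     (\<forall>n eps. 2 \<le> n \<and> 0 < eps \<and> eps < 1 \<longrightarrow>
        real (m n eps) \<le> C / eps \<and>
        (\<forall>r s. real (length (Q n eps r s)) \<le> C * ln (real n) / eps)) \<and>
     (\<forall>n eps r s. 1 \<le> n \<and> 0 < eps \<and> eps < 1 \<longrightarrow> (\<forall>q \<in> set (Q n eps r s). q < n)) \<and>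
     (\<forall>n eps (D :: nat pmf) (f :: nat \<Rightarrow> real).
        1 \<le> n \<and> 0 < eps \<and> eps < 1 \<and> set_pmf D \<subseteq> {..<n} \<longrightarrow>
          (convex_on_grid n f \<longrightarrow> measure_pmf.prob (tester_run R m Q Dec n eps D f) {True} = 1) \<and>
          (far_from_convex n D eps f \<longrightarrow>
             measure_pmf.prob (tester_run R m Q Dec n eps D f) {False} \<ge> 2/3))"
proof -
  let ?R = "\<lambda>_ _. return_pmf 0" and ?m = "\<lambda>_. num_samples"
    and ?Q = "\<lambda>n eps _. tester_queries n eps" and ?Dec = "\<lambda>n eps _. tester_accepts n eps"
  have run: "tester_run ?R ?m ?Q ?Dec n eps D f
      = map_pmf (\<lambda>s. tester_accepts n eps s (map f (tester_queries n eps s)))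
          (replicate_pmf (num_samples eps) D)" for n eps D f
    by (simp add: tester_run_def iid_samples_eq_replicate_pmf map_pmf_def)
  have samples: "real (num_samples eps) \<le> 41 / eps" if "0 < eps" "eps < 1" for eps
    using num_samples_le[of eps] that by (simp add: field_simps)
  have accept: "measure_pmf.prob (tester_run ?R ?m ?Q ?Dec n eps D f) {True} = 1"
    if "1 \<le> n" "convex_on_grid n f" for n eps D f
    using tester_accepts_convex[OF that] by (simp add: run measure_map_pmf)
  have reject: "2 / 3 \<le> measure_pmf.prob (tester_run ?R ?m ?Q ?Dec n eps D f) {False}"
    if "0 < eps" "set_pmf D \<subseteq> {..<n}" "far_from_convex n D eps f" for n eps D f
    using prob_tester_accepts_far[OF that]
      measure_pmf.prob_compl[of "{s. tester_accepts n eps s (map f (tester_queries n eps s))}"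
        "replicate_pmf (num_samples eps) D"]
    by (simp add: run measure_map_pmf vimage_def Compl_eq_Diff_UNIV[symmetric] Collect_neg_eq)
  show ?thesis
    by (intro exI[of _ ?R] exI[of _ ?m] exI[of _ ?Q] exI[of _ ?Dec] exI[of _ "41::real"]
        conjI allI impI ballI; (elim conjE)?)
      (use samples length_tester_queries tester_queries_less accept reject in auto)
qed

end
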